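(* Let $N\ge 2$ and let $T^{H,F}_N$ be the period of the F-type Hadamard walk on the cycle $C_N$. Then $$T^{H,F}_N=\begin{cases}8,& N=2,\\ 8,& N=4,\\ 24,& N=8,\\ \infty,&\text{otherwise.}\end{cases}$$
   Context: Let $N\ge 2$ and identify the vertex set of the cycle graph $C_N$ with $\mathbb{Z}/N\mathbb{Z}$. The state space is $\mathcal H=\mathbb{C}^{N}\otimes\mathbb{C}^2$ with orthonormal basis $\{|x\rangle\otimes|\leftarrow\rangle,\ |x\rangle\otimes|\rightarrow\rangle : x\in\mathbb{Z}/N\mathbb{Z}\}$. The shift operator $S$ is the unitary with $S(|x\rangle\otimes|\leftarrow\rangle)=|x-1\rangle\otimes|\leftarrow\rangle$ and $S(|x\rangle\otimes|\rightarrow\rangle)=|x+1\rangle\otimes|\rightarrow\rangle$ (indices mod $N$). For a unitary $2\times2$ local coin $A$ (in the basis $(|\leftarrow\rangle,|\rightarrow\rangle)$) the time-evolution operator is $U=S\,(I_N\otimes A)$. The F-type Hadamard walk uses $A^{H,F}=\frac{1}{\sqrt2}\begin{bmatrix}1&-1\\1&1\end{bmatrix}$, with time-evolution operator $U^{H,F}_N$. The period of a walk with time-evolution operator $U$ is $\inf\{n\ge1: U^n=I\}$, defined to be $\infty$ if no such $n$ exists. *)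

theory Defs
  imports "Jordan_Normal_Form.Matrix" "HOL-Library.Extended_Nat" Complex_Main
begin

text \<open>State space C^N (x) C^2, basis vector |x> (x) |left> has index 2*x,
  |x> (x) |right> has index 2*x+1 (x in {0..N-1} representing Z/NZ).
  Coin index 0 = left, 1 = right.\<close>

definition shift_op :: "nat \<Rightarrow> complex mat" where
  "shift_op N = mat (2*N) (2*N) (\<lambda>(i,j).
     if j mod 2 = 0
     then (if i = 2 * ((j div 2 + N - 1) mod N) then 1 else 0)
     else (if i = 2 * ((j div 2 + 1) mod N) + 1 then 1 else 0))"

definition coin_op :: "nat \<Rightarrow> complex mat \<Rightarrow> complex mat" where
  "coin_op N A = mat (2*N) (2*N) (\<lambda>(i,j).
     if i div 2 = j div 2 then A $$ (i mod 2, j mod 2) else 0)"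

definition time_evolution :: "nat \<Rightarrow> complex mat \<Rightarrow> complex mat" where
  "time_evolution N A = shift_op N * coin_op N A"

definition hadamard_F_coin :: "complex mat" where
  "hadamard_F_coin = mat 2 2 (\<lambda>(i,j).
     (if i = 0 \<and> j = 1 then - 1 else 1) / complex_of_real (sqrt 2))"

definition walk_period :: "complex mat \<Rightarrow> enat" where
  "walk_period U = (if \<exists>n::nat. n \<ge> 1 \<and> U ^\<^sub>m n = 1\<^sub>m (dim_row U)
     then enat (LEAST n::nat. n \<ge> 1 \<and> U ^\<^sub>m n = 1\<^sub>m (dim_row U)) else \<infinity>)"

end

theory Submission
  imports Defs "HOL-Computational_Algebra.Primes" "HOL-Number_Theory.Cong"
begin

text \<open>
  Read a vector of C^N (x) C^2 as an N-periodic pair of functions on Z. Then sqrt 2 * U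
  becomes the integer operator M(f, g)(y) = (f(y+1) - g(y+1), f(y-1) + g(y-1)), which
  satisfies M^4 + 2 M^2 + 4 = H M^2 with H = T^2 + T^-2, T the unit translation.
  If U^n = I then M^(2n) = 2^n on periodic states, so the iterates X_i = M^(2i) P / 2^i are
  n-periodic in i and have denominators dividing 2^n. The relation
  2 (X_(i+2) + X_(i+1) + X_i) = H X_(i+1) then shows that 2^(j-n) divides H^j v for every
  N-periodic integer function v. This fails for the indicator function of N Z when N is not
  a power of 2, because modulo 2 the power H^(2^n) is T^(2^(n+1)) + T^-(2^(n+1)); and it fails
  when 16 divides N for a function with v(y + 8) = - v(y), on which H^2 = 2.
  For N = 2, 4, 8 the period is found by iterating M on integer lists.
\<close>

section \<open>Entries of the walk operator\<close>

abbreviation sqrt2 :: complex where "sqrt2 \<equiv> complex_of_real (sqrt 2)"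

lemma sqrt2_squared: "sqrt2 * sqrt2 = 2"
  by (simp flip: of_real_mult)

lemma sqrt2_power_double: "sqrt2 ^ (2 * m) = 2 ^ m"
  by (simp add: power_mult power2_eq_square sqrt2_squared)

lemma mult_mat_vec_index_single:
  assumes "A \<in> carrier_mat m n" "dim_vec v = n" "i < m" "a < n"
    and "\<And>j. j < n \<Longrightarrow> j \<noteq> a \<Longrightarrow> A $$ (i, j) = 0"
  shows "(A *\<^sub>v v) $ i = A $$ (i, a) * v $ a"
proof -
  have "(A *\<^sub>v v) $ i = (\<Sum>j\<in>{0..<n}. A $$ (i, j) * v $ j)"
    using assms by (simp add: scalar_prod_def)
  also have "\<dots> = (\<Sum>j\<in>{a}. A $$ (i, j) * v $ j)"
    by (rule sum.mono_neutral_right) (use assms in auto)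
  finally show ?thesis by simp
qed

lemma mult_mat_vec_index_pair:
  assumes "A \<in> carrier_mat m n" "dim_vec v = n" "i < m" "a < n" "b < n" "a \<noteq> b"
    and "\<And>j. j < n \<Longrightarrow> j \<noteq> a \<Longrightarrow> j \<noteq> b \<Longrightarrow> A $$ (i, j) = 0"
  shows "(A *\<^sub>v v) $ i = A $$ (i, a) * v $ a + A $$ (i, b) * v $ b"
proof -
  have "(A *\<^sub>v v) $ i = (\<Sum>j\<in>{0..<n}. A $$ (i, j) * v $ j)"
    using assms by (simp add: scalar_prod_def)
  also have "\<dots> = (\<Sum>j\<in>{a, b}. A $$ (i, j) * v $ j)"
    by (rule sum.mono_neutral_right) (use assms in auto)
  finally show ?thesis using assms(6) by simp
qed

lemma mat_eq_one_if_fixes_unit_vecs: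
  fixes A :: "'a :: semiring_1 mat"
  assumes "A \<in> carrier_mat n n" and "\<And>k. k < n \<Longrightarrow> A *\<^sub>v unit_vec n k = unit_vec n k"
  shows "A = 1\<^sub>m n"
proof (rule eq_matI)
  fix i k assume "i < dim_row (1\<^sub>m n :: 'a mat)" "k < dim_col (1\<^sub>m n :: 'a mat)"
  then have ik: "i < n" "k < n" by auto
  have "A $$ (i, k) = (A *\<^sub>v unit_vec n k) $ i"
    using assms(1) ik by (simp add: mult_mat_vec_index_single)
  then show "A $$ (i, k) = 1\<^sub>m n $$ (i, k)" using assms(2) ik by simp
qed (use assms in auto)

lemma shift_op_carrier [simp]: "shift_op N \<in> carrier_mat (2 * N) (2 * N)"
  by (simp add: shift_op_def)

lemma coin_op_carrier [simp]: "coin_op N A \<in> carrier_mat (2 * N) (2 * N)"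
  by (simp add: coin_op_def)

lemma time_evolution_carrier [simp]: "time_evolution N A \<in> carrier_mat (2 * N) (2 * N)"
  unfolding time_evolution_def by (rule mult_carrier_mat[OF shift_op_carrier coin_op_carrier])

lemma mod_pred_eq_iff:
  fixes x y N :: nat
  assumes "x < N" "y < N"
  shows "y = (x + N - 1) mod N \<longleftrightarrow> x = (y + 1) mod N"
  using assms by (auto simp: mod_if)

lemma shift_op_mult_vec:
  assumes "dim_vec w = 2 * N" "m < N"
  shows "(shift_op N *\<^sub>v w) $ (2 * m) = w $ (2 * ((m + 1) mod N))"
    and "(shift_op N *\<^sub>v w) $ (2 * m + 1) = w $ (2 * ((m + N - 1) mod N) + 1)"
proof -
  have "(m + N - 1) mod N < N" using assms by simp
  then have pred_less: "2 * ((m + N - 1) mod N) + 1 < 2 * N" by linarith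
  have parity: "2 * a \<noteq> Suc (2 * b)" "Suc (2 * b) \<noteq> 2 * a" for a b :: nat by presburger+
  have "(shift_op N *\<^sub>v w) $ (2 * m) = shift_op N $$ (2 * m, 2 * ((m + 1) mod N)) * w $ (2 * ((m + 1) mod N))"
  proof (rule mult_mat_vec_index_single[OF shift_op_carrier assms(1)])
    fix j assume "j < 2 * N" "j \<noteq> 2 * ((m + 1) mod N)"
    moreover obtain x where x: "j = 2 * x \<or> j = 2 * x + 1" by (metis evenE oddE)
    ultimately show "shift_op N $$ (2 * m, j) = 0"
      using assms mod_pred_eq_iff[of x N m] by (auto simp: shift_op_def parity)
  qed (use assms in auto)
  moreover have "shift_op N $$ (2 * m, 2 * ((m + 1) mod N)) = 1"
    using assms mod_pred_eq_iff[of "(m + 1) mod N" N m] by (simp add: shift_op_def)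
  ultimately show "(shift_op N *\<^sub>v w) $ (2 * m) = w $ (2 * ((m + 1) mod N))" by simp
  have "(shift_op N *\<^sub>v w) $ (2 * m + 1) =
      shift_op N $$ (2 * m + 1, 2 * ((m + N - 1) mod N) + 1) * w $ (2 * ((m + N - 1) mod N) + 1)"
  proof (rule mult_mat_vec_index_single[OF shift_op_carrier assms(1)])
    fix j assume "j < 2 * N" "j \<noteq> 2 * ((m + N - 1) mod N) + 1"
    moreover obtain x where x: "j = 2 * x \<or> j = 2 * x + 1" by (metis evenE oddE)
    ultimately show "shift_op N $$ (2 * m + 1, j) = 0"
      using assms mod_pred_eq_iff[of m N x] by (auto simp: shift_op_def parity)
  qed (use assms pred_less in auto)
  moreover have "shift_op N $$ (2 * m + 1, 2 * ((m + N - 1) mod N) + 1) = 1"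
    using assms mod_pred_eq_iff[of m N "(m + N - 1) mod N"] pred_less by (simp add: shift_op_def)
  ultimately show "(shift_op N *\<^sub>v w) $ (2 * m + 1) = w $ (2 * ((m + N - 1) mod N) + 1)" by simp
qed

lemma coin_op_hadamard_mult_vec:
  assumes "dim_vec v = 2 * N" "m < N"
  shows "(coin_op N hadamard_F_coin *\<^sub>v v) $ (2 * m) = (v $ (2 * m) - v $ (2 * m + 1)) / sqrt2"
    and "(coin_op N hadamard_F_coin *\<^sub>v v) $ (2 * m + 1) = (v $ (2 * m) + v $ (2 * m + 1)) / sqrt2"
proof -
  have row: "(coin_op N hadamard_F_coin *\<^sub>v v) $ i =
      coin_op N hadamard_F_coin $$ (i, 2 * m) * v $ (2 * m)
      + coin_op N hadamard_F_coin $$ (i, 2 * m + 1) * v $ (2 * m + 1)"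
    if i: "i div 2 = m" "i < 2 * N" for i
  proof (rule mult_mat_vec_index_pair[OF coin_op_carrier assms(1) i(2)])
    fix j assume "j < 2 * N" "j \<noteq> 2 * m" "j \<noteq> 2 * m + 1"
    moreover from this(2,3) have "j div 2 \<noteq> m" by presburger
    ultimately show "coin_op N hadamard_F_coin $$ (i, j) = 0" using i by (simp add: coin_op_def)
  qed (use assms in auto)
  show "(coin_op N hadamard_F_coin *\<^sub>v v) $ (2 * m) = (v $ (2 * m) - v $ (2 * m + 1)) / sqrt2"
    using row[of "2 * m"] assms by (simp add: coin_op_def hadamard_F_coin_def diff_divide_distrib)
  show "(coin_op N hadamard_F_coin *\<^sub>v v) $ (2 * m + 1) = (v $ (2 * m) + v $ (2 * m + 1)) / sqrt2"
    using row[of "2 * m + 1"] assms by (simp add: coin_op_def hadamard_F_coin_def add_divide_distrib)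
qed

abbreviation hadamard_walk :: "nat \<Rightarrow> complex mat" where
  "hadamard_walk N \<equiv> time_evolution N hadamard_F_coin"

lemma dim_row_hadamard_walk [simp]: "dim_row (hadamard_walk N) = 2 * N"
  using time_evolution_carrier by blast

section \<open>Periodic states on the integers\<close>

type_synonym state = "(int \<Rightarrow> complex) \<times> (int \<Rightarrow> complex)"

definition scale_state :: "complex \<Rightarrow> state \<Rightarrow> state" where
  "scale_state c P = (\<lambda>y. c * fst P y, \<lambda>y. c * snd P y)"

definition add_state :: "state \<Rightarrow> state \<Rightarrow> state" where
  "add_state P Q = (\<lambda>y. fst P y + fst Q y, \<lambda>y. snd P y + snd Q y)"

definition walk_step :: "state \<Rightarrow> state" where
  "walk_step P = (\<lambda>y. fst P (y + 1) - snd P (y + 1), \<lambda>y. fst P (y - 1) + snd P (y - 1))"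

definition hop2 :: "(int \<Rightarrow> 'a :: plus) \<Rightarrow> int \<Rightarrow> 'a" where
  "hop2 f y = f (y + 2) + f (y - 2)"

definition hop2_state :: "state \<Rightarrow> state" where
  "hop2_state P = (hop2 (fst P), hop2 (snd P))"

definition periodic_state :: "nat \<Rightarrow> state \<Rightarrow> bool" where
  "periodic_state N P \<longleftrightarrow> (\<forall>y. fst P y = fst P (y mod int N) \<and> snd P y = snd P (y mod int N))"

definition integral_state :: "state \<Rightarrow> bool" where
  "integral_state P \<longleftrightarrow> (\<forall>y. fst P y \<in> \<int> \<and> snd P y \<in> \<int>)"

lemma scale_state_scale_state: "scale_state a (scale_state b P) = scale_state (a * b) P"
  by (simp add: scale_state_def algebra_simps)

lemma scale_state_one [simp]: "scale_state 1 P = P"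
  by (simp add: scale_state_def)

lemma scale_state_add_state: "scale_state c (add_state P Q) = add_state (scale_state c P) (scale_state c Q)"
  by (simp add: scale_state_def add_state_def algebra_simps)

lemma walk_step_iter_scale_state: "(walk_step ^^ k) (scale_state c P) = scale_state c ((walk_step ^^ k) P)"
proof (induction k)
  case (Suc k)
  then show ?case by (simp add: walk_step_def scale_state_def algebra_simps)
qed simp

lemma hop2_state_scale_state: "hop2_state (scale_state c P) = scale_state c (hop2_state P)"
  by (simp add: hop2_state_def hop2_def scale_state_def fun_eq_iff algebra_simps)

lemma hop2_state_iter_scale_state: "(hop2_state ^^ k) (scale_state c P) = scale_state c ((hop2_state ^^ k) P)"
  by (induction k) (simp_all add: hop2_state_scale_state)

lemma hop2_state_iter_add_state:
  "(hop2_state ^^ k) (add_state P Q) = add_state ((hop2_state ^^ k) P) ((hop2_state ^^ k) Q)"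
proof (induction k)
  case (Suc k)
  then show ?case by (simp add: hop2_state_def hop2_def add_state_def fun_eq_iff algebra_simps)
qed simp

lemma hop2_state_iter: "(hop2_state ^^ k) P = ((hop2 ^^ k) (fst P), (hop2 ^^ k) (snd P))"
  by (induction k) (simp_all add: hop2_state_def)

lemma hop2_iter_of_int: "(hop2 ^^ k) (\<lambda>y. of_int (v y)) = (\<lambda>y. of_int ((hop2 ^^ k) v y))"
  by (induction k) (simp_all add: hop2_def fun_eq_iff)

lemma integral_state_walk_step_iter: "integral_state P \<Longrightarrow> integral_state ((walk_step ^^ k) P)"
  by (induction k) (auto simp: integral_state_def walk_step_def)

lemma integral_state_add_state: "integral_state P \<Longrightarrow> integral_state Q \<Longrightarrow> integral_state (add_state P Q)"
  unfolding integral_state_def add_state_def by auto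

lemma integral_state_scale_power_two: "integral_state P \<Longrightarrow> integral_state (scale_state (2 ^ k) P)"
  unfolding integral_state_def scale_state_def by auto

lemma walk_step_quartic_relation:
  "add_state ((walk_step ^^ 4) P) (add_state (scale_state 2 ((walk_step ^^ 2) P)) (scale_state 4 P))
    = hop2_state ((walk_step ^^ 2) P)"
  by (simp add: numeral_eq_Suc walk_step_def add_state_def scale_state_def hop2_state_def hop2_def
      fun_eq_iff algebra_simps)

abbreviation site :: "nat \<Rightarrow> int \<Rightarrow> nat" where
  "site N y \<equiv> nat (y mod int N)"

lemma site_less: "N > 0 \<Longrightarrow> site N y < N"
  by (simp add: nat_less_iff)

lemma site_succ:
  assumes "N > 0"
  shows "site N (y + 1) = (site N y + 1) mod N"
proof -
  have "int ((site N y + 1) mod N) = (y + 1) mod int N"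
    using assms by (simp add: of_nat_mod mod_add_right_eq add.commute)
  then show ?thesis by (metis nat_int)
qed

lemma site_pred:
  assumes "N > 0"
  shows "site N (y - 1) = (site N y + N - 1) mod N"
proof -
  have "int (site N y + N - 1) = y mod int N - 1 + int N"
    using assms by (simp add: of_nat_diff)
  then have "int ((site N y + N - 1) mod N) = (y - 1) mod int N"
    by (simp add: of_nat_mod mod_diff_left_eq)
  then show ?thesis by (metis nat_int)
qed

definition lift_vec :: "nat \<Rightarrow> complex vec \<Rightarrow> state" where
  "lift_vec N v = (\<lambda>y. v $ (2 * site N y), \<lambda>y. v $ (2 * site N y + 1))"

definition vec_of_state :: "nat \<Rightarrow> state \<Rightarrow> complex vec" where
  "vec_of_state N P = vec (2 * N) (\<lambda>i. if even i then fst P (int (i div 2)) else snd P (int (i div 2)))"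

lemma lift_vec_of_state:
  assumes "N > 0" and "periodic_state N P"
  shows "lift_vec N (vec_of_state N P) = P"
proof -
  have "fst (lift_vec N (vec_of_state N P)) y = fst P y \<and> snd (lift_vec N (vec_of_state N P)) y = snd P y"
    for y
  proof -
    have "int (site N y) = y mod int N" using assms(1) by simp
    moreover have "fst P (y mod int N) = fst P y" "snd P (y mod int N) = snd P y"
      using assms(2) unfolding periodic_state_def by metis+
    moreover have "2 * site N y < 2 * N" "2 * site N y + 1 < 2 * N"
      using site_less[OF assms(1), of y] by linarith+
    ultimately show ?thesis by (simp add: lift_vec_def vec_of_state_def)
  qed
  then show ?thesis by (simp add: prod_eq_iff fun_eq_iff)
qed

lemma vec_of_state_lift_vec:
  assumes "dim_vec v = 2 * N"
  shows "vec_of_state N (lift_vec N v) = v"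
proof (rule eq_vecI)
  fix i assume "i < dim_vec v"
  then have "i div 2 < N" using assms by simp
  then show "vec_of_state N (lift_vec N v) $ i = v $ i"
    using \<open>i < dim_vec v\<close> assms by (simp add: vec_of_state_def lift_vec_def)
qed (use assms in \<open>simp add: vec_of_state_def\<close>)

lemma lift_vec_hadamard_walk:
  assumes v: "dim_vec v = 2 * N" and N: "N > 0"
  shows "lift_vec N (hadamard_walk N *\<^sub>v v) = scale_state (1 / sqrt2) (walk_step (lift_vec N v))"
proof -
  let ?w = "coin_op N hadamard_F_coin *\<^sub>v v"
  have U: "hadamard_walk N *\<^sub>v v = shift_op N *\<^sub>v ?w"
    unfolding time_evolution_def by (rule assoc_mult_mat_vec[OF shift_op_carrier coin_op_carrier carrier_vecI[OF v]])
  have w: "dim_vec ?w = 2 * N" by (simp add: coin_op_def)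
  have "fst (lift_vec N (shift_op N *\<^sub>v ?w)) y = fst (scale_state (1 / sqrt2) (walk_step (lift_vec N v))) y
      \<and> snd (lift_vec N (shift_op N *\<^sub>v ?w)) y = snd (scale_state (1 / sqrt2) (walk_step (lift_vec N v))) y"
    for y
  proof -
    have m: "site N y < N" "(site N y + 1) mod N < N" "(site N y + N - 1) mod N < N"
      using N site_less by auto
    show ?thesis
      unfolding lift_vec_def walk_step_def scale_state_def fst_conv snd_conv site_succ[OF N] site_pred[OF N]
        shift_op_mult_vec[OF w m(1)] coin_op_hadamard_mult_vec[OF v m(2)] coin_op_hadamard_mult_vec[OF v m(3)]
      by simp
  qed
  then show ?thesis unfolding U by (simp add: prod_eq_iff fun_eq_iff)
qed

lemma lift_vec_hadamard_walk_power:
  assumes "dim_vec v = 2 * N" and "N > 0"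
  shows "lift_vec N (hadamard_walk N ^\<^sub>m n *\<^sub>v v) = scale_state (1 / sqrt2 ^ n) ((walk_step ^^ n) (lift_vec N v))"
  using assms(1)
proof (induction n arbitrary: v)
  case 0
  then show ?case using one_mult_mat_vec[OF carrier_vecI[OF 0]] by simp
next
  case (Suc n)
  have "hadamard_walk N ^\<^sub>m Suc n *\<^sub>v v = hadamard_walk N ^\<^sub>m n *\<^sub>v (hadamard_walk N *\<^sub>v v)"
    unfolding pow_mat.simps
    by (rule assoc_mult_mat_vec[OF pow_carrier_mat[OF time_evolution_carrier] time_evolution_carrier
          carrier_vecI[OF Suc.prems]])
  then show ?case
    using Suc.IH[of "hadamard_walk N *\<^sub>v v"] Suc.prems assms(2)
    by (simp add: lift_vec_hadamard_walk walk_step_iter_scale_state scale_state_scale_state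
        funpow_swap1 mult.commute)
qed

lemma walk_step_power_eq_scale:
  assumes "N > 0" and "hadamard_walk N ^\<^sub>m n = 1\<^sub>m (2 * N)" and "periodic_state N P"
  shows "(walk_step ^^ n) P = scale_state (sqrt2 ^ n) P"
proof -
  let ?v = "vec_of_state N P"
  have v: "dim_vec ?v = 2 * N" by (simp add: vec_of_state_def)
  then have "hadamard_walk N ^\<^sub>m n *\<^sub>v ?v = ?v" unfolding assms(2) by (rule one_mult_mat_vec[OF carrier_vecI])
  then have "P = scale_state (1 / sqrt2 ^ n) ((walk_step ^^ n) P)"
    using lift_vec_hadamard_walk_power[OF v assms(1), of n] lift_vec_of_state[OF assms(1,3)] by simp
  then have "scale_state (sqrt2 ^ n) P = scale_state (sqrt2 ^ n) (scale_state (1 / sqrt2 ^ n) ((walk_step ^^ n) P))"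
    by simp
  then show ?thesis by (simp add: scale_state_scale_state)
qed

section \<open>Divisibility of iterated double hops\<close>

definition renormalized_walk :: "nat \<Rightarrow> state \<Rightarrow> state" where
  "renormalized_walk i P = scale_state (1 / 2 ^ i) ((walk_step ^^ (2 * i)) P)"

lemma renormalized_walk_recurrence:
  "add_state (renormalized_walk (i + 2) P) (add_state (renormalized_walk (i + 1) P) (renormalized_walk i P))
    = scale_state (1 / 2) (hop2_state (renormalized_walk (i + 1) P))"
proof -
  define Q where "Q = (walk_step ^^ (2 * i)) P"
  have "2 * (i + 2) = 4 + 2 * i" "2 * (i + 1) = 2 + 2 * i" by simp_all
  then have X: "renormalized_walk (i + 2) P = scale_state (1 / 2 ^ (i + 2)) ((walk_step ^^ 4) Q)"
    "renormalized_walk (i + 1) P = scale_state (1 / 2 ^ (i + 1)) ((walk_step ^^ 2) Q)"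
    "renormalized_walk i P = scale_state (1 / 2 ^ i) Q"
    unfolding renormalized_walk_def Q_def by (simp_all only: funpow_add o_apply)
  have "scale_state (1 / 2) (hop2_state (renormalized_walk (i + 1) P))
      = scale_state (1 / 2 ^ (i + 2)) (hop2_state ((walk_step ^^ 2) Q))"
    unfolding X by (simp add: hop2_state_scale_state scale_state_scale_state)
  also have "\<dots> = scale_state (1 / 2 ^ (i + 2))
      (add_state ((walk_step ^^ 4) Q) (add_state (scale_state 2 ((walk_step ^^ 2) Q)) (scale_state 4 Q)))"
    by (simp only: walk_step_quartic_relation)
  finally show ?thesis
    unfolding X by (simp add: scale_state_add_state scale_state_scale_state)
qed

locale scalar_walk_power =
  fixes N n :: nat
  assumes n_pos: "1 \<le> n"
    and walk_power: "\<And>P. periodic_state N P \<Longrightarrow> (walk_step ^^ n) P = scale_state (sqrt2 ^ n) P"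
begin

lemma walk_power_double:
  assumes "periodic_state N P"
  shows "(walk_step ^^ (2 * n)) P = scale_state (2 ^ n) P"
proof -
  have "(walk_step ^^ (2 * n)) P = (walk_step ^^ n) ((walk_step ^^ n) P)"
    by (simp add: mult_2 funpow_add)
  also have "\<dots> = scale_state (sqrt2 ^ n * sqrt2 ^ n) P"
    using assms by (simp add: walk_power walk_step_iter_scale_state scale_state_scale_state)
  finally show ?thesis by (simp add: power_mult_distrib[symmetric] sqrt2_squared)
qed

lemma renormalized_walk_add_period:
  assumes "periodic_state N P"
  shows "renormalized_walk (i + n) P = renormalized_walk i P"
proof -
  have "(walk_step ^^ (2 * (i + n))) P = (walk_step ^^ (2 * i)) ((walk_step ^^ (2 * n)) P)"
    by (simp add: funpow_add algebra_simps)
  then show ?thesis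
    using assms by (simp add: renormalized_walk_def walk_power_double walk_step_iter_scale_state
        scale_state_scale_state power_add)
qed

lemma renormalized_walk_mod_period:
  assumes "periodic_state N P"
  shows "renormalized_walk i P = renormalized_walk (i mod n) P"
proof -
  have "renormalized_walk (r + q * n) P = renormalized_walk r P" for r q
  proof (induction q)
    case (Suc q)
    have "r + Suc q * n = (r + q * n) + n" by simp
    then show ?case by (metis Suc.IH renormalized_walk_add_period[OF assms])
  qed simp
  then show ?thesis by (metis mod_div_mult_eq)
qed

lemma hop2_renormalized_walk:
  assumes "periodic_state N P"
  shows "hop2_state (renormalized_walk i P) = scale_state 2
    (add_state (renormalized_walk (i + 1) P) (add_state (renormalized_walk i P) (renormalized_walk (i + n - 1) P)))"
proof -
  have "i + n - 1 + 2 = (i + 1) + n" "i + n - 1 + 1 = i + n" using n_pos by auto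
  then have "renormalized_walk (i + n - 1 + 2) P = renormalized_walk (i + 1) P"
    "renormalized_walk (i + n - 1 + 1) P = renormalized_walk i P"
    by (simp_all only: renormalized_walk_add_period[OF assms])
  note recurrence = renormalized_walk_recurrence[of "i + n - 1" P, unfolded this]
  have "hop2_state (renormalized_walk i P) = scale_state 2 (scale_state (1 / 2) (hop2_state (renormalized_walk i P)))"
    by (simp add: scale_state_scale_state)
  also note recurrence[symmetric]
  finally show ?thesis .
qed

lemma integral_scaled_renormalized_walk:
  assumes "periodic_state N P" and "integral_state P"
  shows "integral_state (scale_state (2 ^ n) (renormalized_walk i P))"
proof -
  have "(2 :: complex) ^ n * (1 / 2 ^ (i mod n)) = 2 ^ (n - i mod n)"
    using n_pos by (simp add: power_diff)
  then have "scale_state (2 ^ n) (renormalized_walk i P) =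
      scale_state (2 ^ (n - i mod n)) ((walk_step ^^ (2 * (i mod n))) P)"
    by (subst renormalized_walk_mod_period[OF assms(1)]) (simp add: renormalized_walk_def scale_state_scale_state)
  then show ?thesis
    using assms(2) by (simp add: integral_state_scale_power_two integral_state_walk_step_iter)
qed

lemma integral_scaled_hop2_iter:
  assumes "periodic_state N P" and "integral_state P"
  shows "integral_state (scale_state (2 ^ n / 2 ^ j) ((hop2_state ^^ j) (renormalized_walk i P)))"
proof (induction j arbitrary: i)
  case 0
  then show ?case using integral_scaled_renormalized_walk[OF assms] by simp
next
  case (Suc j)
  have "scale_state (2 ^ n / 2 ^ Suc j) ((hop2_state ^^ Suc j) (renormalized_walk i P)) =
      add_state (scale_state (2 ^ n / 2 ^ j) ((hop2_state ^^ j) (renormalized_walk (i + 1) P)))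
       (add_state (scale_state (2 ^ n / 2 ^ j) ((hop2_state ^^ j) (renormalized_walk i P)))
        (scale_state (2 ^ n / 2 ^ j) ((hop2_state ^^ j) (renormalized_walk (i + n - 1) P))))"
    by (simp only: funpow_Suc_right o_apply hop2_renormalized_walk[OF assms(1)])
      (simp add: hop2_state_iter_scale_state hop2_state_iter_add_state scale_state_scale_state
        scale_state_add_state)
  then show ?case using Suc.IH by (simp add: integral_state_add_state)
qed

lemma power_two_dvd_hop2_iter:
  assumes "\<And>y. v y = v (y mod int N)" and "n \<le> j"
  shows "(2 :: int) ^ (j - n) dvd (hop2 ^^ j) v y"
proof -
  define P :: state where "P = (\<lambda>y. of_int (v y), \<lambda>y. 0)"
  have "periodic_state N P" "integral_state P"
    unfolding P_def periodic_state_def integral_state_def using assms(1) by auto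
  then have "integral_state (scale_state (2 ^ n / 2 ^ j) ((hop2_state ^^ j) P))"
    using integral_scaled_hop2_iter[of P j 0] by (simp add: renormalized_walk_def)
  then have "(2 ^ n / 2 ^ j) * of_int ((hop2 ^^ j) v y) \<in> (\<int> :: complex set)"
    unfolding integral_state_def scale_state_def hop2_state_iter P_def by (simp add: hop2_iter_of_int)
  moreover have "(2 :: complex) ^ j = 2 ^ n * 2 ^ (j - n)"
    using assms(2) by (simp flip: power_add)
  ultimately obtain z where "of_int ((hop2 ^^ j) v y) / 2 ^ (j - n) = (of_int z :: complex)"
    by (auto elim!: Ints_cases)
  then have "of_int ((hop2 ^^ j) v y) = (of_int (2 ^ (j - n) * z) :: complex)"
    by (simp add: field_simps)
  then show ?thesis by (metis dvd_triv_left of_int_eq_iff)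
qed

end

section \<open>The two obstructions\<close>

lemma hop2_iter_translate:
  "(hop2 ^^ k) (\<lambda>y. f (y + c)) = (\<lambda>y. (hop2 ^^ k) f (y + c))"
  "(hop2 ^^ k) (\<lambda>y. f (y - c)) = (\<lambda>y. (hop2 ^^ k) f (y - c))"
  by (induction k) (simp_all add: hop2_def fun_eq_iff algebra_simps)

lemma hop2_iter_add:
  fixes f g :: "int \<Rightarrow> 'a :: ab_semigroup_add"
  shows "(hop2 ^^ k) (\<lambda>y. f y + g y) = (\<lambda>y. (hop2 ^^ k) f y + (hop2 ^^ k) g y)"
  by (induction k) (simp_all add: hop2_def fun_eq_iff algebra_simps)

lemma hop2_iter_cong:
  fixes f g :: "int \<Rightarrow> int"
  assumes "\<And>y. [f y = g y] (mod d)"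
  shows "[(hop2 ^^ k) f y = (hop2 ^^ k) g y] (mod d)"
proof (induction k arbitrary: y)
  case (Suc k)
  then show ?case by (simp add: hop2_def cong_add)
qed (simp add: assms)

text \<open>Frobenius modulo 2: (T^2 + T^-2)^(2^e) = T^(2^(e+1)) + T^-(2^(e+1)).\<close>

lemma hop2_iter_power_two_cong:
  fixes v :: "int \<Rightarrow> int"
  shows "[(hop2 ^^ 2 ^ e) v y = v (y + 2 ^ (e + 1)) + v (y - 2 ^ (e + 1))] (mod 2)"
proof (induction e arbitrary: y)
  case 0
  then show ?case by (simp add: hop2_def)
next
  case (Suc e)
  define k :: nat where "k = 2 ^ e"
  define a :: int where "a = 2 ^ (e + 1)"
  have IH: "[(hop2 ^^ k) v z = v (z + a) + v (z - a)] (mod 2)" for z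
    using Suc unfolding k_def a_def .
  have "(hop2 ^^ 2 ^ Suc e) v y = (hop2 ^^ k) ((hop2 ^^ k) v) y"
    by (simp add: k_def mult_2 funpow_add)
  also have "[\<dots> = (hop2 ^^ k) (\<lambda>z. v (z + a) + v (z - a)) y] (mod 2)"
    by (rule hop2_iter_cong) (rule IH)
  also have "(hop2 ^^ k) (\<lambda>z. v (z + a) + v (z - a)) y = (hop2 ^^ k) v (y + a) + (hop2 ^^ k) v (y - a)"
    by (simp add: hop2_iter_add hop2_iter_translate)
  also have "[\<dots> = (v (y + a + a) + v (y + a - a)) + (v (y - a + a) + v (y - a - a))] (mod 2)"
    by (rule cong_add[OF IH IH])
  also have "(v (y + a + a) + v (y + a - a)) + (v (y - a + a) + v (y - a - a))
      = v (y + 2 ^ (Suc e + 1)) + v (y - 2 ^ (Suc e + 1)) + 2 * v y"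
    by (simp add: a_def algebra_simps)
  also have "[\<dots> = v (y + 2 ^ (Suc e + 1)) + v (y - 2 ^ (Suc e + 1))] (mod 2)"
    by (simp add: cong_def)
  finally show ?case .
qed

lemma hop2_hop2: "hop2 (hop2 v) y = v (y + 4) + 2 * v y + v (y - 4)"
  for v :: "int \<Rightarrow> 'a :: comm_ring_1"
  by (simp add: hop2_def algebra_simps)

lemma hop2_iter_antiperiodic:
  fixes v :: "int \<Rightarrow> 'a :: comm_ring_1"
  assumes "\<And>y. v (y + 8) = - v y"
  shows "(hop2 ^^ (2 * m)) v = (\<lambda>y. 2 ^ m * v y)"
proof (induction m)
  case (Suc m)
  have hop2_scale: "hop2 (\<lambda>y. c * f y) = (\<lambda>y. c * hop2 f y)" for c :: 'a and f
    by (simp add: hop2_def fun_eq_iff algebra_simps)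
  have "(hop2 ^^ (2 * Suc m)) v = hop2 (hop2 ((hop2 ^^ (2 * m)) v))"
    by simp
  also have "\<dots> = (\<lambda>y. 2 ^ m * hop2 (hop2 v) y)"
    by (simp only: Suc.IH hop2_scale)
  also have "\<dots> = (\<lambda>y. 2 ^ Suc m * v y)"
    using assms[of "y - 4" for y] by (simp add: fun_eq_iff hop2_hop2 algebra_simps)
  finally show ?case .
qed simp

lemma odd_hop2_iter_indicator:
  assumes "\<nexists>m. N = 2 ^ m"
  shows "odd ((hop2 ^^ 2 ^ e) (\<lambda>y. if int N dvd y then 1 else 0 :: int) (2 ^ (e + 1)))"
proof -
  have "\<not> N dvd 2 ^ (e + 2)"
  proof
    assume "N dvd 2 ^ (e + 2)"
    then obtain i where "N = 2 ^ i" using divides_primepow_nat[OF two_is_prime_nat] by blast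
    then show False using assms by blast
  qed
  moreover have "(2 :: int) ^ (e + 1) + 2 ^ (e + 1) = int (2 ^ (e + 2))" by simp
  ultimately have "\<not> int N dvd 2 ^ (e + 1) + 2 ^ (e + 1)"
    by (simp only: of_nat_dvd_iff) simp
  then have "[(hop2 ^^ 2 ^ e) (\<lambda>y. if int N dvd y then 1 else 0 :: int) (2 ^ (e + 1)) = 1] (mod 2)"
    using hop2_iter_power_two_cong[of e "\<lambda>y. if int N dvd y then 1 else 0" "2 ^ (e + 1)"] by simp
  then show ?thesis by (metis cong_dvd_iff odd_one)
qed

lemma hadamard_walk_power_ne_one:
  assumes "N \<ge> 2" and "N \<notin> {2, 4, 8}" and "n \<ge> 1"
  shows "hadamard_walk N ^\<^sub>m n \<noteq> 1\<^sub>m (2 * N)"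
proof
  assume U: "hadamard_walk N ^\<^sub>m n = 1\<^sub>m (2 * N)"
  have N: "N > 0" using assms(1) by simp
  interpret scalar_walk_power N n
    using assms(3) walk_step_power_eq_scale[OF N U] by unfold_locales
  show False
  proof (cases "\<exists>m. N = 2 ^ m")
    case True
    then obtain m where m: "N = 2 ^ m" by blast
    have "4 \<le> m"
    proof (rule ccontr)
      assume "\<not> 4 \<le> m"
      then have "m \<in> {0, 1, 2, 3}" by auto
      then show False using m assms(1,2) by auto
    qed
    then have "(2 :: int) ^ 4 dvd 2 ^ m" by (rule le_imp_power_dvd)
    then have N16: "(16 :: int) dvd int N" using m by simp
    define v :: "int \<Rightarrow> int" where "v y = (if y mod 16 = 0 then 1 else if y mod 16 = 8 then - 1 else 0)" for y
    have antiperiodic: "v (y + 8) = - v y" for y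
    proof -
      have "(y + 8) mod 16 = 0 \<longleftrightarrow> y mod 16 = 8" "(y + 8) mod 16 = 8 \<longleftrightarrow> y mod 16 = 0"
        by presburger+
      then show ?thesis by (simp add: v_def)
    qed
    have "v y = v (y mod int N)" for y
      unfolding v_def using mod_mod_cancel[OF N16] by simp
    then have "(2 :: int) ^ (2 * (n + 1) - n) dvd (hop2 ^^ (2 * (n + 1))) v 0"
      by (intro power_two_dvd_hop2_iter) auto
    then have "(2 :: int) ^ (n + 2) dvd 2 ^ (n + 1)"
      unfolding hop2_iter_antiperiodic[where v = v, OF antiperiodic] by (simp add: v_def)
    then show False by (simp add: dvd_power_iff)
  next
    case False
    let ?v = "\<lambda>y. if int N dvd y then 1 else 0 :: int"
    have "n < 2 ^ n" by (rule less_exp)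
    then have "(2 :: int) dvd 2 ^ (2 ^ n - n)" by simp
    also have "\<dots> dvd (hop2 ^^ 2 ^ n) ?v (2 ^ (n + 1))"
      using \<open>n < 2 ^ n\<close> by (intro power_two_dvd_hop2_iter) (auto simp: dvd_mod_iff)
    finally show False using odd_hop2_iter_indicator[OF False] by blast
  qed
qed

section \<open>Exact computation on the cycles of length 2, 4 and 8\<close>

definition walk_step_list :: "int list \<times> int list \<Rightarrow> int list \<times> int list" where
  "walk_step_list S = (rotate 1 (map2 (-) (fst S) (snd S)),
     rotate (length (fst S) - 1) (map2 (+) (fst S) (snd S)))"

fun walk_steps_list :: "nat \<Rightarrow> int list \<times> int list \<Rightarrow> int list \<times> int list" where
  "walk_steps_list 0 S = S"
| "walk_steps_list (Suc n) S = walk_steps_list n (walk_step_list S)"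

definition lift_list :: "nat \<Rightarrow> int list \<times> int list \<Rightarrow> state" where
  "lift_list N S = (\<lambda>y. of_int (fst S ! site N y), \<lambda>y. of_int (snd S ! site N y))"

definition basis_list :: "nat \<Rightarrow> nat \<Rightarrow> int list \<times> int list" where
  "basis_list N k = (map (\<lambda>x. if 2 * x = k then 1 else 0) [0..<N], map (\<lambda>x. if 2 * x + 1 = k then 1 else 0) [0..<N])"

definition scale_list :: "int \<Rightarrow> int list \<times> int list \<Rightarrow> int list \<times> int list" where
  "scale_list c S = (map ((*) c) (fst S), map ((*) c) (snd S))"

definition returns_to :: "nat \<Rightarrow> nat \<Rightarrow> int \<Rightarrow> nat \<Rightarrow> bool" where
  "returns_to N n c k \<longleftrightarrow> walk_steps_list n (basis_list N k) = scale_list c (basis_list N k)"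

text \<open>If U^n fixes the first basis vector, the integer iterate must be sqrt 2 ^ n > 0 times it.\<close>

definition returns_positively :: "nat \<Rightarrow> nat \<Rightarrow> bool" where
  "returns_positively N n \<longleftrightarrow>
     (let c = fst (walk_steps_list n (basis_list N 0)) ! 0 in 0 < c \<and> returns_to N n c 0)"

lemma length_walk_step_list:
  assumes "length (fst S) = N" "length (snd S) = N"
  shows "length (fst (walk_step_list S)) = N" "length (snd (walk_step_list S)) = N"
  using assms by (simp_all add: walk_step_list_def)

lemma length_walk_steps_list:
  assumes "length (fst S) = N" "length (snd S) = N"
  shows "length (fst (walk_steps_list k S)) = N \<and> length (snd (walk_steps_list k S)) = N"
  using assms by (induction k arbitrary: S) (simp_all add: length_walk_step_list)

lemma length_basis_list: "length (fst (basis_list N k)) = N" "length (snd (basis_list N k)) = N"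
  by (simp_all add: basis_list_def)

lemma walk_step_lift_list:
  assumes "length (fst S) = N" "length (snd S) = N" "N > 0"
  shows "walk_step (lift_list N S) = lift_list N (walk_step_list S)"
proof -
  have "fst (walk_step (lift_list N S)) y = fst (lift_list N (walk_step_list S)) y
      \<and> snd (walk_step (lift_list N S)) y = snd (lift_list N (walk_step_list S)) y" for y
  proof -
    have m: "site N y < N" "(1 + site N y) mod N < N" "(N - 1 + site N y) mod N < N"
      using assms(3) site_less by auto
    have "(N - 1 + site N y) mod N = (site N y + N - 1) mod N"
      using assms(3) by (simp add: algebra_simps)
    then show ?thesis
      using assms m unfolding walk_step_def lift_list_def walk_step_list_def
      by (simp add: nth_rotate nth_rotate1 site_succ site_pred add.commute)
  qed
  then show ?thesis by (simp add: prod_eq_iff fun_eq_iff)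
qed

lemma walk_step_iter_lift_list:
  assumes "length (fst S) = N" "length (snd S) = N" "N > 0"
  shows "(walk_step ^^ k) (lift_list N S) = lift_list N (walk_steps_list k S)"
  using assms(1,2)
proof (induction k arbitrary: S)
  case (Suc k)
  then show ?case
    using length_walk_step_list[OF Suc.prems] assms(3)
    by (simp only: funpow_Suc_right o_apply walk_step_lift_list walk_steps_list.simps)
qed simp

lemma lift_vec_unit_vec:
  assumes "k < 2 * N" "N > 0"
  shows "lift_vec N (unit_vec (2 * N) k) = lift_list N (basis_list N k)"
proof -
  have "2 * site N y < 2 * N" "2 * site N y + 1 < 2 * N" for y
    using site_less[OF assms(2), of y] by linarith+
  then show ?thesis
    using assms(1) site_less[OF assms(2)] by (simp add: lift_vec_def lift_list_def basis_list_def prod_eq_iff fun_eq_iff)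
qed

lemma lift_list_scale_list:
  assumes "length (fst S) = N" "length (snd S) = N" "N > 0"
  shows "lift_list N (scale_list c S) = scale_state (of_int c) (lift_list N S)"
  using assms site_less by (simp add: lift_list_def scale_state_def scale_list_def)

lemma hadamard_walk_power_eq_one_if_returns:
  assumes "N > 0" and "sqrt2 ^ p = of_int c" and "\<And>k. k < 2 * N \<Longrightarrow> returns_to N p c k"
  shows "hadamard_walk N ^\<^sub>m p = 1\<^sub>m (2 * N)"
proof (rule mat_eq_one_if_fixes_unit_vecs)
  show "hadamard_walk N ^\<^sub>m p \<in> carrier_mat (2 * N) (2 * N)"
    by (rule pow_carrier_mat[OF time_evolution_carrier])
  fix k assume k: "k < 2 * N"
  let ?e = "unit_vec (2 * N) k :: complex vec" and ?B = "basis_list N k"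
  have "lift_vec N (hadamard_walk N ^\<^sub>m p *\<^sub>v ?e) = scale_state (1 / sqrt2 ^ p) (lift_list N (walk_steps_list p ?B))"
    using lift_vec_hadamard_walk_power[of ?e N p] lift_vec_unit_vec[OF k assms(1)]
      walk_step_iter_lift_list[OF length_basis_list assms(1)] assms(1) by simp
  also have "\<dots> = lift_list N ?B"
    using assms(3)[OF k] lift_list_scale_list[OF length_basis_list assms(1)]
    by (simp add: returns_to_def scale_state_scale_state flip: assms(2))
  also have "\<dots> = lift_vec N ?e"
    by (rule lift_vec_unit_vec[OF k assms(1), symmetric])
  finally have "vec_of_state N (lift_vec N (hadamard_walk N ^\<^sub>m p *\<^sub>v ?e)) = vec_of_state N (lift_vec N ?e)"
    by simp
  then show "hadamard_walk N ^\<^sub>m p *\<^sub>v ?e = ?e"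
    by (simp add: vec_of_state_lift_vec)
qed

lemma returns_positively_if_hadamard_walk_power_eq_one:
  assumes "N > 0" and "hadamard_walk N ^\<^sub>m n = 1\<^sub>m (2 * N)"
  shows "returns_positively N n"
proof -
  let ?e = "unit_vec (2 * N) 0 :: complex vec" and ?B = "basis_list N 0"
  let ?S = "walk_steps_list n ?B"
  have "hadamard_walk N ^\<^sub>m n *\<^sub>v ?e = ?e"
    unfolding assms(2) by (rule one_mult_mat_vec) simp
  then have "lift_list N ?B = scale_state (1 / sqrt2 ^ n) (lift_list N ?S)"
    using lift_vec_hadamard_walk_power[of ?e N n] lift_vec_unit_vec[of 0 N]
      walk_step_iter_lift_list[OF length_basis_list assms(1)] assms(1) by simp
  then have E: "lift_list N ?S = scale_state (sqrt2 ^ n) (lift_list N ?B)"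
    by (simp add: scale_state_scale_state)
  have entries: "of_int (fst ?S ! x) = sqrt2 ^ n * of_int (fst ?B ! x)"
      "of_int (snd ?S ! x) = sqrt2 ^ n * of_int (snd ?B ! x)" if "x < N" for x
    using fun_cong[OF arg_cong[where f = fst, OF E], of "int x"] fun_cong[OF arg_cong[where f = snd, OF E], of "int x"] that
    by (simp_all add: lift_list_def scale_state_def)
  define c where "c = fst ?S ! 0"
  have "fst ?B ! 0 = 1" using assms(1) by (simp add: basis_list_def)
  then have c: "of_int c = sqrt2 ^ n"
    using entries(1)[OF assms(1)] unfolding c_def by simp
  then have "complex_of_real (real_of_int c) = complex_of_real (sqrt 2 ^ n)"
    by simp
  then have "real_of_int c = sqrt 2 ^ n"
    by (simp only: of_real_eq_iff)
  moreover have "(0 :: real) < sqrt 2 ^ n" by simp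
  ultimately have "0 < real_of_int c" by simp
  then have "0 < c" by simp
  moreover have "?S = scale_list c ?B"
  proof -
    have len: "length (fst ?S) = N" "length (snd ?S) = N"
      using length_walk_steps_list[OF length_basis_list] by auto
    have "fst ?S ! x = c * fst ?B ! x" "snd ?S ! x = c * snd ?B ! x" if "x < N" for x
      using entries[OF that] unfolding c[symmetric] of_int_mult[symmetric] of_int_eq_iff .
    then show ?thesis
      unfolding scale_list_def prod_eq_iff fst_conv snd_conv
      by (intro conjI nth_equalityI) (simp_all add: len length_basis_list)
  qed
  ultimately show ?thesis
    unfolding returns_positively_def returns_to_def Let_def c_def[symmetric] by blast
qed

lemma walk_period_hadamard_walk_eq:
  assumes "N > 0" and "1 \<le> p" and "sqrt2 ^ p = of_int c"
    and "list_all (returns_to N p c) [0..<2 * N]"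
    and "list_all (\<lambda>n. \<not> returns_positively N n) [1..<p]"
  shows "walk_period (hadamard_walk N) = enat p"
proof -
  have one: "hadamard_walk N ^\<^sub>m p = 1\<^sub>m (2 * N)"
    using assms(4) by (intro hadamard_walk_power_eq_one_if_returns[OF assms(1,3)]) (simp add: list_all_iff)
  have "(LEAST n. 1 \<le> n \<and> hadamard_walk N ^\<^sub>m n = 1\<^sub>m (2 * N)) = p"
  proof (rule Least_equality)
    fix n assume n: "1 \<le> n \<and> hadamard_walk N ^\<^sub>m n = 1\<^sub>m (2 * N)"
    show "p \<le> n"
    proof (rule ccontr)
      assume "\<not> p \<le> n"
      then have "\<not> returns_positively N n" using n assms(5) by (simp add: list_all_iff)
      then show False using returns_positively_if_hadamard_walk_power_eq_one[OF assms(1)] n by blast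
    qed
  qed (use assms(2) one in simp)
  then show ?thesis using assms(2) one by (auto simp: walk_period_def)
qed

theorem theorem5p2:
  fixes N :: nat
  assumes "N \<ge> 2"
  shows "walk_period (time_evolution N hadamard_F_coin) =
    (if N = 2 then 8 else if N = 4 then 8 else if N = 8 then 24 else \<infinity>)"
proof -
  have "sqrt2 ^ 8 = of_int 16" "sqrt2 ^ 24 = of_int 4096"
    using sqrt2_power_double[of 4] sqrt2_power_double[of 12] by simp_all
  moreover have "list_all (returns_to 2 8 16) [0..<4]" "list_all (\<lambda>n. \<not> returns_positively 2 n) [1..<8]"
    "list_all (returns_to 4 8 16) [0..<8]" "list_all (\<lambda>n. \<not> returns_positively 4 n) [1..<8]"
    "list_all (returns_to 8 24 4096) [0..<16]" "list_all (\<lambda>n. \<not> returns_positively 8 n) [1..<24]"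
    by code_simp+
  ultimately have "walk_period (hadamard_walk 2) = 8" "walk_period (hadamard_walk 4) = 8"
    "walk_period (hadamard_walk 8) = 24"
    using walk_period_hadamard_walk_eq[of 2 8 16] walk_period_hadamard_walk_eq[of 4 8 16]
      walk_period_hadamard_walk_eq[of 8 24 4096] by (simp_all add: numeral_eq_enat)
  moreover have "walk_period (hadamard_walk N) = \<infinity>" if "N \<notin> {2, 4, 8}"
    using hadamard_walk_power_ne_one[OF assms that] by (auto simp: walk_period_def)
  ultimately show ?thesis by auto
qed

end
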